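(* Let $\lambda_0,\lambda_1,\lambda_2$ be positive integers with height $h=\lambda_0+\lambda_1+\lambda_2$. For each labelling $\{i,j,k\}=\{0,1,2\}$ consider the transformed triple $\left(\lambda_j,\lambda_k,\frac{(\lambda_j+\lambda_k)^2}{\lambda_i}\right)$, with height $h_i=\lambda_j+\lambda_k+\frac{(\lambda_j+\lambda_k)^2}{\lambda_i}$. Then there is at most one index $i\in\{0,1,2\}$ with $h_i\le h$. Moreover, if $h_i=h$ then the transformed triple is a permutation of $(\lambda_0,\lambda_1,\lambda_2)$. *)

theory Defs
  imports Complex_Main "HOL-Library.Multiset"
begin

(* A triple (lambda_0, lambda_1, lambda_2) of positive integers is represented
   by a function l :: nat => nat, of which only l 0, l 1, l 2 matter. *)

definition height :: "(nat \<Rightarrow> nat) \<Rightarrow> real" where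
  "height l = real (l 0) + real (l 1) + real (l 2)"

definition transformed :: "(nat \<Rightarrow> nat) \<Rightarrow> nat \<Rightarrow> nat \<Rightarrow> nat \<Rightarrow> real list" where
  "transformed l i j k =
     [real (l j), real (l k), (real (l j) + real (l k))^2 / real (l i)]"

definition theight :: "(nat \<Rightarrow> nat) \<Rightarrow> nat \<Rightarrow> nat \<Rightarrow> nat \<Rightarrow> real" where
  "theight l i j k = real (l j) + real (l k) + (real (l j) + real (l k))^2 / real (l i)"

definition other1 :: "nat \<Rightarrow> nat" where "other1 i = (if i = 0 then 1 else 0)"
definition other2 :: "nat \<Rightarrow> nat" where "other2 i = (if i = 2 then 1 else 2)"

definition h_idx :: "(nat \<Rightarrow> nat) \<Rightarrow> nat \<Rightarrow> real" where
  "h_idx l i = theight l i (other1 i) (other2 i)"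

end

theory Submission
  imports Defs
begin

text \<open>Write \<open>s = \<lambda>\<^sub>j + \<lambda>\<^sub>k\<close>. Then \<open>h\<^sub>i = s + s\<^sup>2/\<lambda>\<^sub>i\<close> and \<open>h = s + \<lambda>\<^sub>i\<close>, so \<open>h\<^sub>i \<le> h\<close>
  holds exactly when \<open>s\<^sup>2 \<le> \<lambda>\<^sub>i\<^sup>2\<close>, i.e. when \<open>\<lambda>\<^sub>i \<ge> \<lambda>\<^sub>j + \<lambda>\<^sub>k\<close>. Two distinct entries
  of a positive triple cannot each dominate the sum of the other two, and when
  \<open>\<lambda>\<^sub>i = \<lambda>\<^sub>j + \<lambda>\<^sub>k\<close> the new entry \<open>s\<^sup>2/\<lambda>\<^sub>i\<close> equals \<open>\<lambda>\<^sub>i\<close>.\<close>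

lemma power2_div_le_self_iff:
  fixes a x :: real
  assumes "a > 0" "x \<ge> 0"
  shows "x\<^sup>2 / a \<le> a \<longleftrightarrow> x \<le> a"
proof -
  have "x\<^sup>2 / a \<le> a \<longleftrightarrow> x\<^sup>2 \<le> a\<^sup>2"
    using assms by (simp add: divide_le_eq power2_eq_square)
  also have "\<dots> \<longleftrightarrow> x \<le> a"
    using assms by simp
  finally show ?thesis .
qed

lemma power2_div_eq_self_iff:
  fixes a x :: real
  assumes "a > 0" "x \<ge> 0"
  shows "x\<^sup>2 / a = a \<longleftrightarrow> x = a"
proof -
  have "x\<^sup>2 / a = a \<longleftrightarrow> x\<^sup>2 = a\<^sup>2"
    using assms by (simp add: divide_eq_eq power2_eq_square)
  also have "\<dots> \<longleftrightarrow> x = a"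
    using assms by simp
  finally show ?thesis .
qed

lemma height_split:
  fixes l :: "nat \<Rightarrow> nat"
  assumes "i \<in> {0,1,2}"
  shows "height l = real (l (other1 i) + l (other2 i)) + real (l i)"
  using assms by (auto simp: height_def other1_def other2_def)

lemma h_idx_split:
  fixes l :: "nat \<Rightarrow> nat"
  shows "h_idx l i = real (l (other1 i) + l (other2 i)) + (real (l (other1 i) + l (other2 i)))\<^sup>2 / real (l i)"
  by (simp add: h_idx_def theight_def)

lemma h_idx_le_height_iff:
  fixes l :: "nat \<Rightarrow> nat"
  assumes "i \<in> {0,1,2}" "l i > 0"
  shows "h_idx l i \<le> height l \<longleftrightarrow> l (other1 i) + l (other2 i) \<le> l i"
proof -
  have "h_idx l i \<le> height l \<longleftrightarrow>
      (real (l (other1 i) + l (other2 i)))\<^sup>2 / real (l i) \<le> real (l i)"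
    unfolding h_idx_split height_split[OF assms(1)] by simp
  also have "\<dots> \<longleftrightarrow> l (other1 i) + l (other2 i) \<le> l i"
    using assms(2) by (subst power2_div_le_self_iff) (simp_all del: of_nat_add)
  finally show ?thesis .
qed

lemma h_idx_eq_height_iff:
  fixes l :: "nat \<Rightarrow> nat"
  assumes "i \<in> {0,1,2}" "l i > 0"
  shows "h_idx l i = height l \<longleftrightarrow> l (other1 i) + l (other2 i) = l i"
proof -
  have "h_idx l i = height l \<longleftrightarrow>
      (real (l (other1 i) + l (other2 i)))\<^sup>2 / real (l i) = real (l i)"
    unfolding h_idx_split height_split[OF assms(1)] by simp
  also have "\<dots> \<longleftrightarrow> l (other1 i) + l (other2 i) = l i"
    using assms(2) by (subst power2_div_eq_self_iff) (simp_all del: of_nat_add)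
  finally show ?thesis .
qed

lemma card_Collect_le_1_if_unique:
  assumes "finite A" "\<And>x y. x \<in> A \<Longrightarrow> y \<in> A \<Longrightarrow> P x \<Longrightarrow> P y \<Longrightarrow> x = y"
  shows "card {x \<in> A. P x} \<le> 1"
proof -
  have "\<forall>x \<in> {x \<in> A. P x}. \<forall>y \<in> {x \<in> A. P x}. x = y"
    using assms(2) by simp
  then show ?thesis
    using card_le_Suc0_iff_eq[of "{x \<in> A. P x}"] assms(1) by simp
qed

lemma dominant_entry_unique:
  fixes l :: "nat \<Rightarrow> nat"
  assumes "l 0 > 0" "l 1 > 0" "l 2 > 0" "i \<in> {0,1,2}" "j \<in> {0,1,2}"
    and "l (other1 i) + l (other2 i) \<le> l i" "l (other1 j) + l (other2 j) \<le> l j"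
  shows "i = j"
  using assms by (auto simp: other1_def other2_def)

lemma mset_transformed_if_sum_eq:
  fixes l :: "nat \<Rightarrow> nat"
  assumes "i \<in> {0,1,2}" "l (other1 i) + l (other2 i) = l i"
  shows "mset (transformed l i (other1 i) (other2 i)) = mset [real (l 0), real (l 1), real (l 2)]"
proof -
  have "real (l (other1 i)) + real (l (other2 i)) = real (l i)"
    using assms(2) by (simp flip: of_nat_add)
  then have "(real (l (other1 i)) + real (l (other2 i)))\<^sup>2 / real (l i) = real (l i)"
    by (simp add: power2_eq_square)
  then have "transformed l i (other1 i) (other2 i) = [real (l (other1 i)), real (l (other2 i)), real (l i)]"
    by (simp add: transformed_def)
  with assms(1) show ?thesis
    by (elim insertE emptyE) (simp_all add: other1_def other2_def add_mset_commute)
qed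

theorem lemma3p14:
  fixes l :: "nat \<Rightarrow> nat"
  assumes pos: "l 0 > 0" "l 1 > 0" "l 2 > 0"
  shows "card {i \<in> {0,1,2::nat}. h_idx l i \<le> height l} \<le> 1 \<and>
         (\<forall>i \<in> {0,1,2}. h_idx l i = height l \<longrightarrow>
           mset (transformed l i (other1 i) (other2 i)) = mset [real (l 0), real (l 1), real (l 2)])"
proof
  have pos_i: "l i > 0" if "i \<in> {0,1,2}" for i
    using that pos by auto
  show "card {i \<in> {0,1,2::nat}. h_idx l i \<le> height l} \<le> 1"
  proof (rule card_Collect_le_1_if_unique)
    fix i j :: nat
    assume "i \<in> {0,1,2}" "j \<in> {0,1,2}" "h_idx l i \<le> height l" "h_idx l j \<le> height l"
    then show "i = j"
      by (intro dominant_entry_unique[OF pos]) (simp_all add: h_idx_le_height_iff pos_i)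
  qed simp
  show "\<forall>i \<in> {0,1,2}. h_idx l i = height l \<longrightarrow>
          mset (transformed l i (other1 i) (other2 i)) = mset [real (l 0), real (l 1), real (l 2)]"
  proof (intro ballI impI)
    fix i :: nat
    assume i: "i \<in> {0,1,2}" and "h_idx l i = height l"
    then have "l (other1 i) + l (other2 i) = l i"
      by (simp add: h_idx_eq_height_iff pos_i)
    with i show "mset (transformed l i (other1 i) (other2 i)) = mset [real (l 0), real (l 1), real (l 2)]"
      by (rule mset_transformed_if_sum_eq)
  qed
qed

end
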